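(* Let $K$ be an admissible kernel on $X\times Y$ with constant $C_K$ and let $\mu_0$ be a Borel probability measure on $Y$. The following are equivalent: (1) the function $U_K^{\mu_0}$ is constant on $X$; (2) $U_K^{\mu_0}(x)=C_K$ for every $x\in X$; (3) $\mu_0$ minimizes $\sup_{x\in X}U_K^{\mu}(x)$ over Borel probability measures $\mu$ on $Y$, i.e. $\inf_{\mu\in\mathcal{M}(Y)}\sup_{x\in X}U_K^\mu(x)=\sup_{x\in X}U_K^{\mu_0}(x)$.
   Context: $(X,d_X)$ and $(Y,d_Y)$ are compact metric spaces and $G$ is a compact topological group acting isometrically and transitively on both $X$ and $Y$. $\mathcal{M}(Y)$ is the set of Borel probability measures on $Y$; $m_X$ and $m_Y$ denote the unique $G$-invariant Radon (Borel) probability measures on $X$ and $Y$. A Borel measurable $K:X\times Y\to\mathbb{R}\cup\{-\infty\}$ is an admissible kernel if: (i) there is $B_K\in[0,\infty)$ with $-\infty\le K(x,y)\le B_K$ for all $x,y$; (ii) $\int_X|K(x,y)|\,dm_X(x)<\infty$ for every $y\in Y$; (iii) for every $y$, $K(\cdot,y)$ is upper semi-continuous; (iv) $K(g(x),y)=K(x,g^{-1}(y))$ for all $g\in G,x\in X,y\in Y$. The constant $C_K$ is the common value of $\int_X K(x,y)\,dm_X(x)$ (independent of $y$). For $\mu\in\mathcal{M}(Y)$, $U_K^\mu(x)=\int_Y K(x,y)\,d\mu(y)$. *)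

theory Defs
  imports "HOL-Probability.Probability" "HOL-Algebra.Group_Action"
begin

text \<open>Extended Lebesgue integral of an extended-real-valued function:
  positive part minus negative part (well defined for functions bounded above
  w.r.t. a finite measure, where the positive part is finite).\<close>
definition ext_integral :: "'a measure \<Rightarrow> ('a \<Rightarrow> ereal) \<Rightarrow> ereal" where
  "ext_integral M f =
     enn2ereal (\<integral>\<^sup>+ x. e2ennreal (f x) \<partial>M) - enn2ereal (\<integral>\<^sup>+ x. e2ennreal (- f x) \<partial>M)"

definition borel_prob_measures :: "'a::topological_space measure set" where
  "borel_prob_measures = {\<mu>. sets \<mu> = sets (borel :: 'a measure) \<and> prob_space \<mu>}"

definition potential :: "('x \<Rightarrow> 'y \<Rightarrow> ereal) \<Rightarrow> 'y measure \<Rightarrow> 'x \<Rightarrow> ereal" where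
  "potential K \<mu> x = ext_integral \<mu> (\<lambda>y. K x y)"

definition compact_topological_group :: "('g, 'b) monoid_scheme \<Rightarrow> 'g topology \<Rightarrow> bool" where
  "compact_topological_group G T \<longleftrightarrow>
     group G \<and> topspace T = carrier G \<and> compact_space T \<and> Hausdorff_space T \<and>
     continuous_map (prod_topology T T) T (\<lambda>(a, b). a \<otimes>\<^bsub>G\<^esub> b) \<and>
     continuous_map T T (\<lambda>a. inv\<^bsub>G\<^esub> a)"

definition isometric_transitive_action ::
    "('g, 'b) monoid_scheme \<Rightarrow> 'g topology \<Rightarrow> ('g \<Rightarrow> 'x::metric_space \<Rightarrow> 'x) \<Rightarrow> bool" where
  "isometric_transitive_action G T \<phi> \<longleftrightarrow>
     group_action G (UNIV :: 'x set) \<phi> \<and>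
     continuous_map (prod_topology T euclidean) euclidean (\<lambda>(g, x). \<phi> g x) \<and>
     (\<forall>g\<in>carrier G. \<forall>x x'. dist (\<phi> g x) (\<phi> g x') = dist x x') \<and>
     (\<forall>x x'. \<exists>g\<in>carrier G. \<phi> g x = x')"

definition invariant_prob_measure ::
    "('g, 'b) monoid_scheme \<Rightarrow> ('g \<Rightarrow> 'x::topological_space \<Rightarrow> 'x) \<Rightarrow> 'x measure \<Rightarrow> bool" where
  "invariant_prob_measure G \<phi> m \<longleftrightarrow>
     m \<in> borel_prob_measures \<and>
     (\<forall>g\<in>carrier G. \<forall>A\<in>sets m. emeasure m (\<phi> g -` A) = emeasure m A)"

definition admissible_kernel ::
    "('g, 'b) monoid_scheme \<Rightarrow> ('g \<Rightarrow> 'x::topological_space \<Rightarrow> 'x) \<Rightarrow> ('g \<Rightarrow> 'y::topological_space \<Rightarrow> 'y)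
      \<Rightarrow> 'x measure \<Rightarrow> ('x \<Rightarrow> 'y \<Rightarrow> ereal) \<Rightarrow> bool" where
  "admissible_kernel G \<phi> \<psi> mX K \<longleftrightarrow>
     (\<lambda>(x, y). K x y) \<in> borel_measurable (borel :: ('x \<times> 'y) measure) \<and>
     (\<exists>B::real. 0 \<le> B \<and> (\<forall>x y. K x y \<le> ereal B)) \<and>
     (\<forall>y. (\<integral>\<^sup>+ x. e2ennreal \<bar>K x y\<bar> \<partial>mX) < \<infinity>) \<and>
     (\<forall>y. \<forall>t::ereal. open {x. K x y < t}) \<and>
     (\<forall>g\<in>carrier G. \<forall>x y. K (\<phi> g x) y = K x (\<psi> (inv\<^bsub>G\<^esub> g) y))"

definition kernel_const :: "'x measure \<Rightarrow> ('x \<Rightarrow> 'y \<Rightarrow> ereal) \<Rightarrow> ereal" where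
  "kernel_const mX K = (THE c. \<forall>y. ext_integral mX (\<lambda>x. K x y) = c)"

end

theory Submission
  imports Defs
begin

text \<open>Since \<open>K \<le> B\<close>, the potential is \<open>U\<^sub>\<mu> = B - D\<^sub>\<mu>\<close> with the nonnegative deficit
  \<open>D\<^sub>\<mu> x = \<integral> (B - K x y) d\<mu>(y)\<close>. By Fubini and the invariance of \<open>m\<^sub>X\<close>, \<open>\<integral> D\<^sub>\<mu> dm\<^sub>X\<close> equals the
  same constant for every \<open>\<mu>\<close>; hence \<open>sup U\<^sub>\<mu> \<ge> C\<^sub>K\<close> always, with equality when \<open>U\<^sub>\<mu>\<close> is constant,
  and a constant potential must equal \<open>C\<^sub>K\<close>. Conversely, if \<open>U\<^sub>\<mu>\<^sub>0\<close> is not constant it lies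
  below \<open>c < sup U\<^sub>\<mu>\<^sub>0\<close> on an open set (lower semicontinuity of \<open>D\<^sub>\<mu>\<^sub>0\<close>); finitely many
  translates of this set cover the compact space \<open>X\<close>, and averaging the correspondingly
  translated copies of \<open>\<mu>\<^sub>0\<close> yields a measure whose potential has strictly smaller supremum.\<close>

lemma borel_prob_measuresD:
  "\<mu> \<in> borel_prob_measures \<Longrightarrow> prob_space \<mu>"
  "\<mu> \<in> borel_prob_measures \<Longrightarrow> sets \<mu> = sets borel"
  by (auto simp: borel_prob_measures_def)

lemma measurable_borel_cong: "sets M = sets borel \<Longrightarrow> f \<in> borel_measurable borel \<Longrightarrow> f \<in> borel_measurable M"
  using measurable_cong_sets[of M borel borel borel] by simp

lemma ext_integral_bounded_above:
  assumes M: "prob_space M" and f: "f \<in> borel_measurable M"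
    and le: "\<And>z. f z \<le> ereal B" and B: "0 \<le> B"
  shows "ext_integral M f = ereal B - enn2ereal (\<integral>\<^sup>+ z. e2ennreal (ereal B - f z) \<partial>M)"
proof -
  interpret prob_space M by fact
  have split_pos: "e2ennreal (ereal B - max z 0) + e2ennreal z = ennreal B"
    and split_neg: "e2ennreal (ereal B - z) = e2ennreal (ereal B - max z 0) + e2ennreal (- z)"
    if "z \<le> ereal B" for z
    using that B by (cases z; auto simp: ennreal_plus[symmetric] max_def e2ennreal_neg ennreal_neg)+
  define a where "a = (\<integral>\<^sup>+ z. e2ennreal (ereal B - max (f z) 0) \<partial>M)"
  define p where "p = (\<integral>\<^sup>+ z. e2ennreal (f z) \<partial>M)"
  define n where "n = (\<integral>\<^sup>+ z. e2ennreal (- f z) \<partial>M)"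
  have ma: "(\<lambda>z. e2ennreal (ereal B - max (f z) 0)) \<in> borel_measurable M"
    and mp: "(\<lambda>z. e2ennreal (f z)) \<in> borel_measurable M"
    and mn: "(\<lambda>z. e2ennreal (- f z)) \<in> borel_measurable M"
    using f by measurable
  have "a + p = (\<integral>\<^sup>+ z. e2ennreal (ereal B - max (f z) 0) + e2ennreal (f z) \<partial>M)"
    unfolding a_def p_def by (rule nn_integral_add[OF ma mp, symmetric])
  also have "\<dots> = ennreal B"
    using split_pos[OF le] by (simp add: emeasure_space_1)
  finally have ap: "a + p = ennreal B" .
  have "(\<integral>\<^sup>+ z. e2ennreal (ereal B - f z) \<partial>M)
      = (\<integral>\<^sup>+ z. e2ennreal (ereal B - max (f z) 0) + e2ennreal (- f z) \<partial>M)"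
    using split_neg[OF le] by simp
  also have "\<dots> = a + n"
    unfolding a_def n_def by (rule nn_integral_add[OF ma mn])
  finally have an: "(\<integral>\<^sup>+ z. e2ennreal (ereal B - f z) \<partial>M) = a + n" .
  obtain ar pr where ar: "a = ennreal ar" "0 \<le> ar" and pr: "p = ennreal pr" "0 \<le> pr"
    using ap by (cases a; cases p) (auto simp: top_unique)
  then have "ennreal (ar + pr) = ennreal B"
    using ap by (simp add: ennreal_plus)
  then have "ar + pr = B"
    by (rule iffD1[OF ennreal_inj[OF add_nonneg_nonneg[OF ar(2) pr(2)] B]])
  moreover have "enn2ereal (a + n) = ereal ar + enn2ereal n"
    using ar by (simp add: plus_ennreal.rep_eq)
  moreover have "enn2ereal n \<ge> 0" by simp
  ultimately show ?thesis
    unfolding ext_integral_def an p_def[symmetric] n_def[symmetric] pr(1)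
    using pr(2) by (cases "enn2ereal n") auto
qed

lemma compact_metric_countable_base:
  assumes "compact (UNIV :: 'a::metric_space set)"
  obtains \<B> :: "'a::metric_space set set" where "countable \<B>" "\<And>b. b \<in> \<B> \<Longrightarrow> open b"
    "\<And>U x. open U \<Longrightarrow> x \<in> U \<Longrightarrow> \<exists>b\<in>\<B>. x \<in> b \<and> b \<subseteq> U"
proof -
  have "\<exists>F. finite F \<and> UNIV \<subseteq> (\<Union>c\<in>F. ball (c::'a) (1 / Suc n))" for n :: nat
    by (rule compactE_image[OF assms, of UNIV "\<lambda>c. ball c (1 / Suc n)"]) auto
  then obtain F :: "nat \<Rightarrow> 'a set"
    where F: "\<And>n. finite (F n)" "\<And>n. UNIV \<subseteq> (\<Union>c\<in>F n. ball c (1 / Suc n))"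
    by metis
  define \<B> :: "'a set set" where "\<B> = (\<Union>n. (\<lambda>c. ball c (1 / Suc n)) ` F n)"
  have "\<exists>b\<in>\<B>. x \<in> b \<and> b \<subseteq> U" if U: "open U" "x \<in> U" for U x
  proof -
    obtain e where e: "e > 0" "ball x e \<subseteq> U"
      using U by (auto simp: open_contains_ball)
    obtain n :: nat where n: "1 / Suc n < e / 2"
      using e(1) by (metis half_gt_zero_iff nat_approx_posE)
    obtain c where c: "c \<in> F n" "x \<in> ball c (1 / Suc n)"
      using F(2)[of n] by blast
    have "ball c (1 / Suc n) \<subseteq> ball x e"
    proof
      fix z assume "z \<in> ball c (1 / Suc n)"
      then have "dist x z < e"
        using c n dist_triangle[of x z c] by (simp add: dist_commute)
      then show "z \<in> ball x e" by simp
    qed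
    then show ?thesis using c e unfolding \<B>_def by blast
  qed
  moreover have "countable \<B>"
    unfolding \<B>_def using F(1) by (intro countable_UN countable_image) (auto intro: countable_finite)
  ultimately show ?thesis using that unfolding \<B>_def by blast
qed

lemma sets_borel_subset_pair_measure_compact:
  assumes "compact (UNIV :: 'a::metric_space set)" "compact (UNIV :: 'b::metric_space set)"
  shows "sets (borel :: ('a \<times> 'b) measure) \<subseteq> sets (borel \<Otimes>\<^sub>M borel :: ('a \<times> 'b) measure)"
proof -
  obtain BA :: "'a set set" where A: "countable BA" "\<And>b. b \<in> BA \<Longrightarrow> open b"
    "\<And>U x. open U \<Longrightarrow> x \<in> U \<Longrightarrow> \<exists>b\<in>BA. x \<in> b \<and> b \<subseteq> U"
    using compact_metric_countable_base[OF assms(1)] by blast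
  obtain BB :: "'b set set" where B: "countable BB" "\<And>b. b \<in> BB \<Longrightarrow> open b"
    "\<And>U x. open U \<Longrightarrow> x \<in> U \<Longrightarrow> \<exists>b\<in>BB. x \<in> b \<and> b \<subseteq> U"
    using compact_metric_countable_base[OF assms(2)] by blast
  have "W \<in> sets (borel \<Otimes>\<^sub>M borel)" if W: "open W" for W :: "('a \<times> 'b) set"
  proof -
    define I where "I = {p \<in> BA \<times> BB. fst p \<times> snd p \<subseteq> W}"
    have "W \<subseteq> (\<Union>p\<in>I. fst p \<times> snd p)"
    proof
      fix z assume "z \<in> W"
      then obtain U V where UV: "open U" "open V" "z \<in> U \<times> V" "U \<times> V \<subseteq> W"
        using open_prod_elim[OF W] by metis
      obtain a where a: "a \<in> BA" "fst z \<in> a" "a \<subseteq> U"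
        using A(3)[OF UV(1), of "fst z"] UV(3) by (auto simp: mem_Times_iff)
      obtain b where b: "b \<in> BB" "snd z \<in> b" "b \<subseteq> V"
        using B(3)[OF UV(2), of "snd z"] UV(3) by (auto simp: mem_Times_iff)
      have "(a, b) \<in> I" unfolding I_def using a b UV(4) by auto
      then show "z \<in> (\<Union>p\<in>I. fst p \<times> snd p)" using a b by (cases z) force
    qed
    then have "W = (\<Union>p\<in>I. fst p \<times> snd p)" by (auto simp: I_def)
    also have "\<dots> \<in> sets (borel \<Otimes>\<^sub>M borel)"
    proof (rule sets.countable_UN'')
      show "countable I" unfolding I_def using A(1) B(1)
        by (intro countable_subset[OF _ countable_SIGMA[of BA "\<lambda>_. BB"]]) auto
    qed (use A(2) B(2) in \<open>auto simp: I_def intro!: pair_measureI\<close>)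
    finally show ?thesis .
  qed
  then show ?thesis unfolding sets_borel
    by (intro sets.sigma_sets_subset') auto
qed

lemma bound_minus_enn2ereal_inject:
  "ereal B - enn2ereal a = ereal B - enn2ereal b \<longleftrightarrow> a = b"
  by (cases a; cases b) auto

lemma bound_minus_enn2ereal_antimono:
  "a \<le> b \<Longrightarrow> ereal B - enn2ereal b \<le> ereal B - enn2ereal a"
  by (intro ereal_minus_mono) (auto simp: less_eq_ennreal.rep_eq)

lemma bound_minus_enn2ereal_le: "ereal B - enn2ereal e \<le> ereal B"
  by (cases e) auto

lemma bound_minus_enn2ereal_le_iff:
  "c \<le> B \<Longrightarrow> ereal B - enn2ereal e \<le> ereal c \<longleftrightarrow> ennreal (B - c) \<le> e"
  by (cases e) (auto simp: ennreal_le_iff2 intro!: ennreal_leI)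

lemma bound_minus_enn2ereal_less_iff:
  "c \<le> B \<Longrightarrow> ereal B - enn2ereal e < ereal c \<longleftrightarrow> ennreal (B - c) < e"
  by (cases e) (auto simp: ennreal_less_iff)

lemma ennreal_less_e2ennreal_bound_minus_iff:
  "0 \<le> r \<Longrightarrow> ennreal r < e2ennreal (ereal B - z) \<longleftrightarrow> z < ereal (B - r)"
  by (cases z) (auto simp: e2ennreal_neg ennreal_neg ennreal_less_iff)

lemma continuous_on_slice:
  assumes "continuous_map (prod_topology T euclidean) euclidean (\<lambda>(g, x). \<phi> g x)" "g \<in> topspace T"
  shows "continuous_on UNIV (\<phi> g)"
proof -
  have "continuous_map euclidean (prod_topology T euclidean) (\<lambda>x. (g, x))"
    using assms(2) by (simp add: continuous_map_paired)
  from continuous_map_compose[OF this assms(1)] show ?thesis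
    by (simp add: o_def continuous_map_iff_continuous2)
qed

locale kernel_potential_setting =
  fixes G :: "('g, 'b) monoid_scheme" and \<phi> :: "'g \<Rightarrow> 'x::metric_space \<Rightarrow> 'x"
    and \<psi> :: "'g \<Rightarrow> 'y::metric_space \<Rightarrow> 'y" and mX :: "'x measure"
    and K :: "'x \<Rightarrow> 'y \<Rightarrow> ereal" and B :: real
  assumes compact_X: "compact (UNIV :: 'x set)" and compact_Y: "compact (UNIV :: 'y set)"
    and group: "group G"
    and continuous_\<phi>: "\<And>g. g \<in> carrier G \<Longrightarrow> continuous_on UNIV (\<phi> g)"
    and continuous_\<psi>: "\<And>g. g \<in> carrier G \<Longrightarrow> continuous_on UNIV (\<psi> g)"
    and transitive_\<phi>: "\<And>x x'. \<exists>g\<in>carrier G. \<phi> g x = x'"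
    and transitive_\<psi>: "\<And>y y'. \<exists>g\<in>carrier G. \<psi> g y = y'"
    and mX: "mX \<in> borel_prob_measures"
    and mX_invariant: "\<And>g A. g \<in> carrier G \<Longrightarrow> A \<in> sets mX \<Longrightarrow> emeasure mX (\<phi> g -` A) = emeasure mX A"
    and K_measurable: "(\<lambda>(x, y). K x y) \<in> borel_measurable borel"
    and B_nonneg: "0 \<le> B" and K_le_B: "\<And>x y. K x y \<le> ereal B"
    and K_integrable: "\<And>y. (\<integral>\<^sup>+ x. e2ennreal \<bar>K x y\<bar> \<partial>mX) < \<infinity>"
    and K_usc: "\<And>y t. open {x. K x y < t}"
    and K_equivariant: "\<And>g x y. g \<in> carrier G \<Longrightarrow> K (\<phi> g x) y = K x (\<psi> (inv\<^bsub>G\<^esub> g) y)"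
begin

definition deficit :: "'y measure \<Rightarrow> 'x \<Rightarrow> ennreal" where
  "deficit \<mu> x = (\<integral>\<^sup>+ y. e2ennreal (ereal B - K x y) \<partial>\<mu>)"

definition kernel_deficit :: "'y \<Rightarrow> ennreal" where
  "kernel_deficit y = (\<integral>\<^sup>+ x. e2ennreal (ereal B - K x y) \<partial>mX)"

text \<open>The base point is irrelevant: \<open>kernel_deficit\<close> is constant by transitivity of \<open>\<psi>\<close>.\<close>

definition mean_deficit :: ennreal where
  "mean_deficit = kernel_deficit undefined"

lemma prob_space_mX: "prob_space mX" and sets_mX: "sets mX = sets borel"
  using mX by (auto simp: borel_prob_measures_def)

lemma space_mX: "space mX = UNIV"
  using sets_eq_imp_space_eq[OF sets_mX] by simp

lemma K_measurable_fst: "K x \<in> borel_measurable borel"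
  using measurable_compose[OF borel_measurable_continuous_onI[of "Pair x"] K_measurable]
  by (simp add: continuous_on_Pair)

lemma K_measurable_snd: "(\<lambda>x. K x y) \<in> borel_measurable borel"
  using measurable_compose[OF borel_measurable_continuous_onI[of "\<lambda>x. (x, y)"] K_measurable]
  by (simp add: continuous_on_Pair)

lemma deficit_integrand_measurable:
  "(\<lambda>y. e2ennreal (ereal B - K x y)) \<in> borel_measurable borel"
  "(\<lambda>x. e2ennreal (ereal B - K x y)) \<in> borel_measurable borel"
  using K_measurable_fst K_measurable_snd by measurable

lemma potential_eq_deficit:
  "\<mu> \<in> borel_prob_measures \<Longrightarrow> potential K \<mu> x = ereal B - enn2ereal (deficit \<mu> x)"
  unfolding potential_def deficit_def
  by (rule ext_integral_bounded_above[OF borel_prob_measuresD(1)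
        measurable_borel_cong[OF borel_prob_measuresD(2) K_measurable_fst] K_le_B B_nonneg])

lemma ext_integral_kernel: "ext_integral mX (\<lambda>x. K x y) = ereal B - enn2ereal (kernel_deficit y)"
  unfolding kernel_deficit_def
  by (rule ext_integral_bounded_above[OF prob_space_mX measurable_borel_cong[OF sets_mX K_measurable_snd] K_le_B B_nonneg])

lemma kernel_deficit_finite: "kernel_deficit y < \<infinity>"
proof -
  interpret prob_space mX by (rule prob_space_mX)
  have le_abs: "e2ennreal (ereal B - z) \<le> ennreal B + e2ennreal \<bar>z\<bar>" if "z \<le> ereal B" for z
  proof (cases z)
    case (real r)
    then show ?thesis
      using B_nonneg by (simp add: ennreal_plus[symmetric] del: ennreal_plus)
  qed (use that in auto)
  have "(\<lambda>x. e2ennreal \<bar>K x y\<bar>) \<in> borel_measurable mX"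
    using measurable_borel_cong[OF sets_mX K_measurable_snd] by measurable
  then have "kernel_deficit y \<le> ennreal B + (\<integral>\<^sup>+ x. e2ennreal \<bar>K x y\<bar> \<partial>mX)"
    unfolding kernel_deficit_def
    using nn_integral_mono[of mX "\<lambda>x. e2ennreal (ereal B - K x y)" "\<lambda>x. ennreal B + e2ennreal \<bar>K x y\<bar>"]
      le_abs[OF K_le_B]
    by (simp add: nn_integral_add emeasure_space_1)
  also have "\<dots> < \<infinity>"
    using K_integrable[of y] by (simp add: ennreal_add_less_top)
  finally show ?thesis .
qed

lemma distr_mX: "g \<in> carrier G \<Longrightarrow> distr mX borel (\<phi> g) = mX"
proof (rule measure_eqI)
  assume g: "g \<in> carrier G"
  have "\<phi> g \<in> measurable mX borel"
    by (intro measurable_borel_cong[OF sets_mX] borel_measurable_continuous_onI continuous_\<phi> g)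
  then show "emeasure (distr mX borel (\<phi> g)) A = emeasure mX A"
    if "A \<in> sets (distr mX borel (\<phi> g))" for A
    using that mX_invariant[OF g] sets_mX space_mX by (simp add: emeasure_distr)
qed (simp add: sets_mX)

lemma kernel_deficit_eq_mean_deficit: "kernel_deficit y = mean_deficit"
proof -
  interpret group G by (rule group)
  obtain g where g: "g \<in> carrier G" "\<psi> g undefined = y"
    using transitive_\<psi> by blast
  have ig: "inv\<^bsub>G\<^esub> g \<in> carrier G" using g by simp
  have "K x y = K (\<phi> (inv\<^bsub>G\<^esub> g) x) undefined" for x
    using K_equivariant[OF ig, of x undefined] g by simp
  then have "kernel_deficit y = (\<integral>\<^sup>+ x. e2ennreal (ereal B - K (\<phi> (inv\<^bsub>G\<^esub> g) x) undefined) \<partial>mX)"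
    unfolding kernel_deficit_def by simp
  also have "\<dots> = (\<integral>\<^sup>+ x. e2ennreal (ereal B - K x undefined) \<partial>distr mX borel (\<phi> (inv\<^bsub>G\<^esub> g)))"
    by (intro nn_integral_distr[symmetric] measurable_borel_cong[OF sets_mX]
        measurable_borel_cong[OF sets_distr] borel_measurable_continuous_onI continuous_\<phi> ig
        deficit_integrand_measurable)
  also have "\<dots> = mean_deficit"
    unfolding mean_deficit_def kernel_deficit_def distr_mX[OF ig] ..
  finally show ?thesis .
qed

lemma kernel_const_eq: "kernel_const mX K = ereal B - enn2ereal mean_deficit"
  unfolding kernel_const_def
  by (rule the_equality) (auto simp: ext_integral_kernel kernel_deficit_eq_mean_deficit)

text \<open>Fubini needs the product \<open>\<sigma>\<close>-algebra, which contains the Borel sets of \<open>X \<times> Y\<close> only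
  because compact metric spaces are second countable.\<close>

lemma deficit_integrand_measurable_pair:
  "(\<lambda>(x, y). e2ennreal (ereal B - K x y)) \<in> borel_measurable (borel \<Otimes>\<^sub>M borel)"
proof (rule measurableI)
  have f: "(\<lambda>(x, y). e2ennreal (ereal B - K x y)) \<in> borel_measurable borel"
    using K_measurable by (simp add: case_prod_beta')
  show "(\<lambda>(x, y). e2ennreal (ereal B - K x y)) -` A \<inter> space (borel \<Otimes>\<^sub>M borel) \<in> sets (borel \<Otimes>\<^sub>M borel)"
    if "A \<in> sets borel" for A
    using measurable_sets[OF f that] sets_borel_subset_pair_measure_compact[OF compact_X compact_Y]
    by (auto simp: space_pair_measure)
qed simp

lemma
  assumes \<mu>: "\<mu> \<in> borel_prob_measures"
  shows deficit_measurable: "deficit \<mu> \<in> borel_measurable mX"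
    and nn_integral_deficit: "(\<integral>\<^sup>+ x. deficit \<mu> x \<partial>mX) = mean_deficit"
proof -
  interpret p\<mu>: prob_space \<mu> using borel_prob_measuresD[OF \<mu>] by simp
  interpret pair_sigma_finite mX \<mu>
    by (intro pair_sigma_finite.intro prob_space_imp_sigma_finite prob_space_mX
        borel_prob_measuresD(1)[OF \<mu>])
  have "sets (mX \<Otimes>\<^sub>M \<mu>) = sets (borel \<Otimes>\<^sub>M borel)"
    by (rule sets_pair_measure_cong[OF sets_mX borel_prob_measuresD(2)[OF \<mu>]])
  then have f: "(\<lambda>(x, y). e2ennreal (ereal B - K x y)) \<in> borel_measurable (mX \<Otimes>\<^sub>M \<mu>)"
    using deficit_integrand_measurable_pair by (subst measurable_cong_sets) auto
  show "deficit \<mu> \<in> borel_measurable mX"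
    unfolding deficit_def[abs_def] by (rule p\<mu>.borel_measurable_nn_integral[OF f])
  have "(\<integral>\<^sup>+ x. deficit \<mu> x \<partial>mX) = (\<integral>\<^sup>+ y. kernel_deficit y \<partial>\<mu>)"
    unfolding deficit_def kernel_deficit_def by (rule Fubini'[OF f, symmetric])
  also have "\<dots> = mean_deficit"
    by (simp add: kernel_deficit_eq_mean_deficit p\<mu>.emeasure_space_1)
  finally show "(\<integral>\<^sup>+ x. deficit \<mu> x \<partial>mX) = mean_deficit" .
qed

lemma ex_deficit_le_mean:
  assumes \<mu>: "\<mu> \<in> borel_prob_measures"
  shows "\<exists>x. deficit \<mu> x \<le> mean_deficit"
proof (rule ccontr)
  interpret prob_space mX by (rule prob_space_mX)
  assume "\<not> (\<exists>x. deficit \<mu> x \<le> mean_deficit)"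
  then have gt: "\<And>x. mean_deficit < deficit \<mu> x" by (simp add: not_le)
  have "(\<integral>\<^sup>+ x. mean_deficit \<partial>mX) < (\<integral>\<^sup>+ x. deficit \<mu> x \<partial>mX)"
  proof (rule nn_integral_less)
    show "(\<integral>\<^sup>+ x. mean_deficit \<partial>mX) \<noteq> \<infinity>"
      using kernel_deficit_finite kernel_deficit_eq_mean_deficit by (simp add: emeasure_space_1)
    show "\<not> (AE x in mX. deficit \<mu> x \<le> mean_deficit)"
    proof
      assume "AE x in mX. deficit \<mu> x \<le> mean_deficit"
      then have "AE x in mX. False"
        by eventually_elim (use gt in \<open>meson leD\<close>)
      then show False by (simp add: AE_False emeasure_space_1)
    qed
  qed (use gt deficit_measurable[OF \<mu>] in \<open>auto intro: less_imp_le\<close>)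
  then show False
    using nn_integral_deficit[OF \<mu>] by (simp add: emeasure_space_1)
qed

lemma kernel_const_le_SUP_potential:
  "\<mu> \<in> borel_prob_measures \<Longrightarrow> kernel_const mX K \<le> (SUP x. potential K \<mu> x)"
  using ex_deficit_le_mean
  by (metis SUP_upper2 UNIV_I bound_minus_enn2ereal_antimono kernel_const_eq potential_eq_deficit)

lemma constant_potential_eq_kernel_const:
  assumes \<mu>: "\<mu> \<in> borel_prob_measures" and c: "\<And>x. potential K \<mu> x = c"
  shows "c = kernel_const mX K"
proof -
  interpret prob_space mX by (rule prob_space_mX)
  have "ereal B - enn2ereal (deficit \<mu> x) = ereal B - enn2ereal (deficit \<mu> undefined)" for x
    using c[of x] c[of undefined] by (simp add: potential_eq_deficit[OF \<mu>])
  then have "deficit \<mu> x = deficit \<mu> undefined" for x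
    by (simp only: bound_minus_enn2ereal_inject)
  then have "(\<integral>\<^sup>+ x. deficit \<mu> x \<partial>mX) = (\<integral>\<^sup>+ x. deficit \<mu> undefined \<partial>mX)"
    by (intro nn_integral_cong)
  then have "deficit \<mu> undefined = mean_deficit"
    using nn_integral_deficit[OF \<mu>] by (simp add: emeasure_space_1)
  then show ?thesis
    using c[of undefined] by (simp add: potential_eq_deficit[OF \<mu>] kernel_const_eq)
qed

lemma open_deficit_greater:
  assumes \<mu>: "\<mu> \<in> borel_prob_measures"
  shows "open {x. t < deficit \<mu> x}"
proof -
  define f where "f x y = e2ennreal (ereal B - K x y)" for x y
  have "closed {x. deficit \<mu> x \<le> t}"
    unfolding closed_sequential_limits
  proof (intro allI impI, elim conjE)
    fix xs l assume xs: "\<forall>n. xs n \<in> {x. deficit \<mu> x \<le> t}" and lim: "xs \<longlonglongrightarrow> l"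
    have "f l y \<le> liminf (\<lambda>n. f (xs n) y)" for y
      unfolding le_Liminf_iff
    proof (intro allI impI)
      fix s assume s: "s < f l y"
      then obtain r where r: "s = ennreal r" "0 \<le> r"
        by (cases s) auto
      have "K l y < ereal (B - r)"
        using s r unfolding f_def by (simp add: ennreal_less_e2ennreal_bound_minus_iff)
      from topological_tendstoD[OF lim K_usc] this
      have "\<forall>\<^sub>F n in sequentially. K (xs n) y < ereal (B - r)" by simp
      then show "\<forall>\<^sub>F n in sequentially. s < f (xs n) y"
        by eventually_elim (simp add: f_def r ennreal_less_e2ennreal_bound_minus_iff)
    qed
    then have "deficit \<mu> l \<le> (\<integral>\<^sup>+ y. liminf (\<lambda>n. f (xs n) y) \<partial>\<mu>)"
      unfolding deficit_def f_def by (intro nn_integral_mono) simp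
    also have "\<dots> \<le> liminf (\<lambda>n. deficit \<mu> (xs n))"
      unfolding deficit_def f_def
      by (intro nn_integral_liminf measurable_borel_cong[OF borel_prob_measuresD(2)[OF \<mu>]]
          deficit_integrand_measurable)
    also have "\<dots> \<le> limsup (\<lambda>n. deficit \<mu> (xs n))"
      by (rule Liminf_le_Limsup) simp
    also have "\<dots> \<le> t"
      using xs by (intro Limsup_bounded) auto
    finally show "l \<in> {x. deficit \<mu> x \<le> t}" by simp
  qed
  then have "open (- {x. deficit \<mu> x \<le> t})" by (rule open_Compl)
  then show ?thesis by (simp add: Collect_neg_eq[symmetric] not_le)
qed

definition translate :: "'y measure \<Rightarrow> 'g \<Rightarrow> 'y measure" where
  "translate \<mu> g = (if g \<in> carrier G then distr \<mu> borel (\<psi> (inv\<^bsub>G\<^esub> g)) else \<mu>)"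

definition average_translates :: "'y measure \<Rightarrow> 'g set \<Rightarrow> 'y measure" where
  "average_translates \<mu> F = measure_pmf (pmf_of_set F) \<bind> translate \<mu>"

lemma translate_measurable:
  assumes \<mu>: "\<mu> \<in> borel_prob_measures" and g: "g \<in> carrier G"
  shows "\<psi> (inv\<^bsub>G\<^esub> g) \<in> measurable \<mu> borel"
proof -
  interpret group G by (rule group)
  show ?thesis using g
    by (intro measurable_borel_cong[OF borel_prob_measuresD(2)[OF \<mu>]]
        borel_measurable_continuous_onI continuous_\<psi>) simp
qed

lemma translate_in_borel_prob_measures:
  assumes \<mu>: "\<mu> \<in> borel_prob_measures"
  shows "translate \<mu> g \<in> borel_prob_measures"
  using \<mu> prob_space.prob_space_distr[OF borel_prob_measuresD(1)[OF \<mu>] translate_measurable[OF \<mu>]]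
  by (auto simp: translate_def borel_prob_measures_def)

lemma deficit_translate:
  assumes \<mu>: "\<mu> \<in> borel_prob_measures" and g: "g \<in> carrier G"
  shows "deficit (translate \<mu> g) x = deficit \<mu> (\<phi> g x)"
proof -
  have "deficit (translate \<mu> g) x = (\<integral>\<^sup>+ y. e2ennreal (ereal B - K x (\<psi> (inv\<^bsub>G\<^esub> g) y)) \<partial>\<mu>)"
    using g unfolding deficit_def translate_def
    by (simp add: nn_integral_distr[OF translate_measurable[OF \<mu> g]] deficit_integrand_measurable)
  also have "\<dots> = deficit \<mu> (\<phi> g x)"
    unfolding deficit_def K_equivariant[OF g] ..
  finally show ?thesis .
qed

lemma translate_measurable_subprob_algebra:
  "\<mu> \<in> borel_prob_measures \<Longrightarrow> translate \<mu> \<in> measurable (measure_pmf p) (subprob_algebra borel)"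
  using translate_in_borel_prob_measures
  by (auto simp: space_subprob_algebra borel_prob_measures_def prob_space_imp_subprob_space)

lemma average_translates_in_borel_prob_measures:
  assumes \<mu>: "\<mu> \<in> borel_prob_measures" and F: "finite F" "F \<noteq> {}"
  shows "average_translates \<mu> F \<in> borel_prob_measures"
proof -
  have "sets (average_translates \<mu> F) = sets borel"
    unfolding average_translates_def
    by (rule sets_bind) (use translate_in_borel_prob_measures[OF \<mu>] F in \<open>auto simp: borel_prob_measures_def\<close>)
  moreover have "prob_space (average_translates \<mu> F)"
    unfolding average_translates_def
    by (rule measure_pmf.prob_space_bind)
       (use translate_in_borel_prob_measures[OF \<mu>] translate_measurable_subprob_algebra[OF \<mu>]
        in \<open>auto simp: borel_prob_measures_def\<close>)
  ultimately show ?thesis by (simp add: borel_prob_measures_def)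
qed

lemma deficit_average_translates:
  assumes \<mu>: "\<mu> \<in> borel_prob_measures" and F: "finite F" "F \<noteq> {}" "F \<subseteq> carrier G"
  shows "deficit (average_translates \<mu> F) x = (\<Sum>g\<in>F. deficit \<mu> (\<phi> g x)) / of_nat (card F)"
proof -
  have "deficit (average_translates \<mu> F) x
      = (\<integral>\<^sup>+ g. deficit (translate \<mu> g) x \<partial>measure_pmf (pmf_of_set F))"
    unfolding deficit_def average_translates_def
    by (rule nn_integral_bind[OF deficit_integrand_measurable(1) translate_measurable_subprob_algebra[OF \<mu>]])
  also have "\<dots> = (\<Sum>g\<in>F. deficit (translate \<mu> g) x) / of_nat (card F)"
    using F by (simp add: nn_integral_pmf_of_set)
  also have "\<dots> = (\<Sum>g\<in>F. deficit \<mu> (\<phi> g x)) / of_nat (card F)"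
    using F(3) by (simp add: deficit_translate[OF \<mu>] subset_iff)
  finally show ?thesis .
qed

lemma deficit_average_translates_lower_bound:
  assumes \<mu>: "\<mu> \<in> borel_prob_measures" and F: "finite F" "F \<noteq> {}" "F \<subseteq> carrier G"
    and LM: "0 \<le> L" "L \<le> M"
    and lower: "\<And>x. ennreal L \<le> deficit \<mu> x"
    and large: "\<exists>g\<in>F. ennreal M \<le> deficit \<mu> (\<phi> g x)"
  shows "ennreal (L + (M - L) / card F) \<le> deficit (average_translates \<mu> F) x"
proof -
  obtain g0 where g0: "g0 \<in> F" "ennreal M \<le> deficit \<mu> (\<phi> g0 x)"
    using large by blast
  define h where "h g = L + (if g = g0 then M - L else 0)" for g
  have n: "0 < real (card F)"
    using F by (simp add: card_gt_0_iff)
  have "(\<Sum>g\<in>F. h g) = card F * L + (M - L)"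
    using F(1) g0(1) by (simp add: h_def sum.distrib)
  then have "L + (M - L) / card F = (\<Sum>g\<in>F. h g) / card F"
    using n by (simp add: field_simps)
  then have "ennreal (L + (M - L) / card F) = ennreal (\<Sum>g\<in>F. h g) / of_nat (card F)"
    unfolding ennreal_of_nat_eq_real_of_nat using LM n
    by (simp add: divide_ennreal h_def sum_nonneg)
  also have "\<dots> = (\<Sum>g\<in>F. ennreal (h g)) / of_nat (card F)"
    by (subst sum_ennreal) (use LM in \<open>auto simp: h_def\<close>)
  also have "\<dots> \<le> (\<Sum>g\<in>F. deficit \<mu> (\<phi> g x)) / of_nat (card F)"
    using lower g0 by (intro divide_right_mono_ennreal sum_mono) (simp add: h_def)
  also have "\<dots> = deficit (average_translates \<mu> F) x"
    by (rule deficit_average_translates[OF \<mu> F, symmetric])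
  finally show ?thesis .
qed

lemma finite_translates_cover:
  assumes "open A" "A \<noteq> {}"
  obtains F where "F \<subseteq> carrier G" "finite F" "F \<noteq> {}" "\<And>x. \<exists>g\<in>F. \<phi> g x \<in> A"
proof -
  obtain a where "a \<in> A" using assms(2) by blast
  then have cover: "UNIV \<subseteq> (\<Union>g\<in>carrier G. \<phi> g -` A)"
    using transitive_\<phi> by blast
  obtain F where F: "F \<subseteq> carrier G" "finite F" "UNIV \<subseteq> (\<Union>g\<in>F. \<phi> g -` A)"
  proof (rule compactE_image[OF compact_X _ cover])
    show "open (\<phi> g -` A)" if "g \<in> carrier G" for g
      by (rule open_vimage[OF assms(1) continuous_\<phi>[OF that]])
  qed
  show ?thesis
    by (rule that[OF F(1,2)]) (use F(3) in auto)
qed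

lemma SUP_potential_decrease_if_nonconstant:
  assumes \<mu>0: "\<mu>0 \<in> borel_prob_measures" and x1: "potential K \<mu>0 x1 < (SUP x. potential K \<mu>0 x)"
  obtains \<nu> where "\<nu> \<in> borel_prob_measures" "(SUP x. potential K \<nu> x) < (SUP x. potential K \<mu>0 x)"
proof -
  let ?U = "potential K \<mu>0"
  have "(SUP x. ?U x) \<le> ereal B"
    unfolding potential_eq_deficit[OF \<mu>0] by (rule SUP_least) (rule bound_minus_enn2ereal_le)
  then obtain s where s: "(SUP x. ?U x) = ereal s" "s \<le> B"
    using x1 by (cases "SUP x. ?U x") auto
  obtain c where c: "?U x1 < ereal c" "c < s"
    using ereal_dense2[OF x1] s by auto
  have cB: "c \<le> B" using c(2) s(2) by simp
  define L where "L = B - s"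
  define M where "M = B - c"
  have LM: "0 \<le> L" "L < M" using c s by (auto simp: L_def M_def)
  have lower: "ennreal L \<le> deficit \<mu>0 x" for x
    using SUP_upper[of x UNIV ?U] s
    by (simp add: L_def potential_eq_deficit[OF \<mu>0] bound_minus_enn2ereal_le_iff)
  define A where "A = {x. ennreal M < deficit \<mu>0 x}"
  have "x1 \<in> A"
    using c(1) cB by (simp add: A_def M_def potential_eq_deficit[OF \<mu>0] bound_minus_enn2ereal_less_iff)
  then obtain F where F: "F \<subseteq> carrier G" "finite F" "F \<noteq> {}" "\<And>x. \<exists>g\<in>F. \<phi> g x \<in> A"
    using finite_translates_cover[of A] open_deficit_greater[OF \<mu>0] unfolding A_def by blast
  define \<nu> where "\<nu> = average_translates \<mu>0 F"
  define w where "w = L + (M - L) / card F"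
  have \<nu>: "\<nu> \<in> borel_prob_measures"
    unfolding \<nu>_def by (rule average_translates_in_borel_prob_measures[OF \<mu>0 F(2,3)])
  have "0 < (M - L) / card F"
    using LM F(2,3) by (simp add: card_gt_0_iff)
  then have Lw: "L < w" by (simp add: w_def)
  have "ennreal w \<le> deficit \<nu> x" for x
    unfolding \<nu>_def w_def
    by (rule deficit_average_translates_lower_bound[OF \<mu>0 F(2,3,1) LM(1) less_imp_le[OF LM(2)] lower])
       (use F(4)[of x] in \<open>auto simp: A_def intro: less_imp_le\<close>)
  then have "potential K \<nu> x \<le> ereal (B - w)" for x
    unfolding potential_eq_deficit[OF \<nu>] using LM Lw by (subst bound_minus_enn2ereal_le_iff) simp_all
  then have "(SUP x. potential K \<nu> x) \<le> ereal (B - w)"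
    by (rule SUP_least)
  also have "\<dots> < ereal s"
    using Lw by (simp add: L_def)
  finally show ?thesis using that \<nu> s by simp
qed

lemma potential_minimizer_iff:
  assumes \<mu>0: "\<mu>0 \<in> borel_prob_measures"
  shows "(\<forall>x. potential K \<mu>0 x = kernel_const mX K) \<longleftrightarrow>
      (INF \<mu>\<in>borel_prob_measures. SUP x. potential K \<mu> x) = (SUP x. potential K \<mu>0 x)"
proof
  assume const: "\<forall>x. potential K \<mu>0 x = kernel_const mX K"
  then have "(INF \<mu>\<in>borel_prob_measures. SUP x. potential K \<mu> x) \<le> kernel_const mX K"
    using INF_lower[OF \<mu>0, of "\<lambda>\<mu>. SUP x. potential K \<mu> x"] by simp
  moreover have "kernel_const mX K \<le> (INF \<mu>\<in>borel_prob_measures. SUP x. potential K \<mu> x)"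
    by (intro INF_greatest kernel_const_le_SUP_potential)
  ultimately show "(INF \<mu>\<in>borel_prob_measures. SUP x. potential K \<mu> x) = (SUP x. potential K \<mu>0 x)"
    using const by simp
next
  assume min: "(INF \<mu>\<in>borel_prob_measures. SUP x. potential K \<mu> x) = (SUP x. potential K \<mu>0 x)"
  have "potential K \<mu>0 x = (SUP x. potential K \<mu>0 x)" for x
  proof (rule ccontr)
    assume "potential K \<mu>0 x \<noteq> (SUP x. potential K \<mu>0 x)"
    then have "potential K \<mu>0 x < (SUP x. potential K \<mu>0 x)"
      by (simp add: order_less_le SUP_upper)
    then obtain \<nu> where "\<nu> \<in> borel_prob_measures" "(SUP x. potential K \<nu> x) < (SUP x. potential K \<mu>0 x)"
      by (rule SUP_potential_decrease_if_nonconstant[OF \<mu>0])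
    then show False
      using min INF_lower[of \<nu> borel_prob_measures "\<lambda>\<mu>. SUP x. potential K \<mu> x"] by simp
  qed
  then show "\<forall>x. potential K \<mu>0 x = kernel_const mX K"
    using constant_potential_eq_kernel_const[OF \<mu>0] by metis
qed

end

lemma kernel_potential_setting_if_admissible:
  fixes G :: "('g, 'b) monoid_scheme" and T :: "'g topology"
    and \<phi> :: "'g \<Rightarrow> 'x::metric_space \<Rightarrow> 'x" and \<psi> :: "'g \<Rightarrow> 'y::metric_space \<Rightarrow> 'y"
  assumes "compact (UNIV :: 'x set)" and "compact (UNIV :: 'y set)"
    and "compact_topological_group G T"
    and "isometric_transitive_action G T \<phi>" and "isometric_transitive_action G T \<psi>"
    and "invariant_prob_measure G \<phi> mX"
    and "admissible_kernel G \<phi> \<psi> mX K"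
  obtains B where "kernel_potential_setting G \<phi> \<psi> mX K B"
proof -
  have G: "group G" "topspace T = carrier G"
    using assms(3) by (auto simp: compact_topological_group_def)
  from assms(7) obtain B :: real where B: "0 \<le> B" "\<And>x y. K x y \<le> ereal B"
    unfolding admissible_kernel_def by blast
  have "kernel_potential_setting G \<phi> \<psi> mX K B"
  proof (rule kernel_potential_setting.intro)
    show "continuous_on UNIV (\<phi> g)" "continuous_on UNIV (\<psi> g)" if "g \<in> carrier G" for g
      using that G(2) assms(4,5) continuous_on_slice[of T \<phi>] continuous_on_slice[of T \<psi>]
      unfolding isometric_transitive_action_def by auto
  qed (use assms(1,2,4-7) G(1) B in \<open>auto simp: isometric_transitive_action_def
        invariant_prob_measure_def admissible_kernel_def\<close>)
  then show ?thesis by (rule that)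
qed

theorem theorem4p7:
  fixes G :: "('g, 'b) monoid_scheme" and T :: "'g topology"
    and \<phi> :: "'g \<Rightarrow> 'x::metric_space \<Rightarrow> 'x" and \<psi> :: "'g \<Rightarrow> 'y::metric_space \<Rightarrow> 'y"
    and mX :: "'x measure" and K :: "'x \<Rightarrow> 'y \<Rightarrow> ereal" and \<mu>0 :: "'y measure"
  assumes "compact (UNIV :: 'x set)" and "compact (UNIV :: 'y set)"
    and "compact_topological_group G T"
    and "isometric_transitive_action G T \<phi>" and "isometric_transitive_action G T \<psi>"
    and "invariant_prob_measure G \<phi> mX"
    and "admissible_kernel G \<phi> \<psi> mX K"
    and "\<mu>0 \<in> borel_prob_measures"
  shows "((\<exists>c. \<forall>x. potential K \<mu>0 x = c) \<longleftrightarrow> (\<forall>x. potential K \<mu>0 x = kernel_const mX K))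
       \<and> ((\<forall>x. potential K \<mu>0 x = kernel_const mX K) \<longleftrightarrow>
          (INF \<mu>\<in>borel_prob_measures. SUP x. potential K \<mu> x) = (SUP x. potential K \<mu>0 x))"
proof -
  obtain B where "kernel_potential_setting G \<phi> \<psi> mX K B"
    using kernel_potential_setting_if_admissible[OF assms(1-7)] .
  then interpret kernel_potential_setting G \<phi> \<psi> mX K B .
  show ?thesis
    using constant_potential_eq_kernel_const[OF assms(8)] potential_minimizer_iff[OF assms(8)]
    by metis
qed

end
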